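(* Let $n\ge 3$, let $d_0,\dots,d_{n-1}>0$ (indices modulo $n$), let $\lambda\in(\tfrac14,1)$, and let $\beta_i$ and the $n\times n$ matrix $Q_n$ be as defined in the context. Let $P_i=\left(\cos\frac{2i\pi}{n},\sin\frac{2i\pi}{n}\right)\in\mathbb{R}^2$ for $i=0,\dots,n-1$, let $C_P=\sum_{i=0}^{n-1}\beta_iP_i$, and let $P-C_P$ denote the $n\times 2$ matrix whose $i$-th row is $P_i-C_P$. Then $$Q_n(P-C_P)=\lambda(P-C_P),$$ i.e. for every $j$, $\sum_{i=0}^{n-1}Q_{j,i}(P_i-C_P)=\lambda(P_j-C_P)$.
   Context: $\alpha_j=\frac{1}{n}\frac{d_{j-1}d_{j+2}}{(d_{j-1}+d_{j+1})(d_j+d_{j+2})}$, $\beta_i=\frac{d_{i-1}(d_{i-2}+d_{i+2})+d_{i+2}(d_{i-1}+d_{i+3})}{\sum_{k=0}^{n-1}(d_k+d_{k+2})(d_{k-1}+d_{k+3})}$, and $Q_n=(Q_{i,j})_{i,j=0}^{n-1}$ with $Q_{i,j}=(1-\lambda)\beta_j+2\lambda\alpha_i(1+2\cos\frac{2(j-i)\pi}{n})$ for $j\ne i$ and $Q_{i,i}=\lambda+(1-\lambda)\beta_i-2(n-3)\lambda\alpha_i$. Equivalently, the rule is $\overline P_j=(1-\lambda)C+\lambda P_j+2\lambda\alpha_j\big(-nP_j+\sum_{i}(1+2\cos\frac{2(j-i)\pi}{n})P_i\big)$ with $C=\sum_i\beta_iP_i$. *)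

theory Defs
  imports "HOL-Analysis.Analysis"
begin

definition dm :: "nat \<Rightarrow> (nat \<Rightarrow> real) \<Rightarrow> int \<Rightarrow> real" where
  "dm n d k = d (nat (k mod int n))"

definition alpha :: "nat \<Rightarrow> (nat \<Rightarrow> real) \<Rightarrow> nat \<Rightarrow> real" where
  "alpha n d j = (1 / real n) *
     (dm n d (int j - 1) * dm n d (int j + 2)) /
     ((dm n d (int j - 1) + dm n d (int j + 1)) * (dm n d (int j) + dm n d (int j + 2)))"

definition beta :: "nat \<Rightarrow> (nat \<Rightarrow> real) \<Rightarrow> nat \<Rightarrow> real" where
  "beta n d i =
     (dm n d (int i - 1) * (dm n d (int i - 2) + dm n d (int i + 2))
      + dm n d (int i + 2) * (dm n d (int i - 1) + dm n d (int i + 3)))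
     / (\<Sum>k<n. (dm n d (int k) + dm n d (int k + 2)) * (dm n d (int k - 1) + dm n d (int k + 3)))"

definition Qmat :: "nat \<Rightarrow> (nat \<Rightarrow> real) \<Rightarrow> real \<Rightarrow> nat \<Rightarrow> nat \<Rightarrow> real" where
  "Qmat n d lam i j =
     (if j \<noteq> i then (1 - lam) * beta n d j
        + 2 * lam * alpha n d i * (1 + 2 * cos (2 * (real j - real i) * pi / real n))
      else lam + (1 - lam) * beta n d i - 2 * (real n - 3) * lam * alpha n d i)"

definition Ppt :: "nat \<Rightarrow> nat \<Rightarrow> real \<times> real" where
  "Ppt n i = (cos (2 * real i * pi / real n), sin (2 * real i * pi / real n))"

definition CP :: "nat \<Rightarrow> (nat \<Rightarrow> real) \<Rightarrow> real \<times> real" where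
  "CP n d = (\<Sum>i<n. beta n d i *\<^sub>R Ppt n i)"

end

theory Submission
  imports Defs
begin

(* Write theta_i = 2 i pi / n. After splitting off a diagonal correction, row j of Q_n has the
   weights (1 - lam) beta_i + 2 lam alpha_j (1 + 2 cos (theta_i - theta_j)). The beta_i sum to 1
   (their numerators telescope cyclically) and the cosines sum to 0, so every row sums to 1 and
   it suffices to compute Q_n P. The points P_i sum to 0, and by product-to-sum together with
   n >= 3 we get sum_i cos (theta_i - theta_j) P_i = (n/2) P_j; so the alpha_j-terms cancel
   against the diagonal correction, leaving Q_n P = (1 - lam) C_P + lam P. *)

lemma sum_cis_equally_spaced:
  fixes n k :: nat
  assumes "0 < k" "k < n"
  shows "(\<Sum>i<n. cis (2 * real k * real i * pi / real n + c)) = 0"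
proof -
  define w where "w = cis (2 * real k * pi / real n)"
  have "w \<noteq> 1"
  proof
    assume "w = 1"
    then obtain m :: int where "2 * real k * pi / real n = real_of_int m * 2 * pi"
      by (auto simp: w_def complex_eq_iff cos_one_2pi_int)
    with assms have "real k / real n = real_of_int m" by (simp add: field_simps)
    moreover have "0 < real k / real n" "real k / real n < 1" using assms by auto
    ultimately have "0 < m" "m < 1" by simp_all
    then show False by simp
  qed
  moreover have "w ^ n = 1"
  proof -
    have "w ^ n = cis (real n * (2 * real k * pi / real n))"
      by (simp only: w_def Complex.DeMoivre)
    also have "\<dots> = cis (2 * pi * real k)"
      using assms by (simp add: field_simps)
    also have "\<dots> = 1"
      by (rule cis_multiple_2pi) simp
    finally show ?thesis .
  qed
  moreover have "cis (2 * real k * real i * pi / real n + c) = cis c * w ^ i" for i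
    by (simp add: w_def Complex.DeMoivre cis_mult algebra_simps)
  ultimately show ?thesis by (simp add: geometric_sum flip: sum_distrib_left)
qed

lemma sum_cos_equally_spaced:
  fixes n k :: nat
  assumes "0 < k" "k < n"
  shows "(\<Sum>i<n. cos (2 * real k * real i * pi / real n + c)) = 0"
  using arg_cong[OF sum_cis_equally_spaced[OF assms], of Re] by (simp add: Re_sum)

lemma sum_sin_equally_spaced:
  fixes n k :: nat
  assumes "0 < k" "k < n"
  shows "(\<Sum>i<n. sin (2 * real k * real i * pi / real n + c)) = 0"
  using arg_cong[OF sum_cis_equally_spaced[OF assms], of Im] by (simp add: Im_sum)

lemma sum_Ppt:
  assumes "1 < n"
  shows "(\<Sum>i<n. Ppt n i) = 0"
  using sum_cos_equally_spaced[OF _ assms, of 0] sum_sin_equally_spaced[OF _ assms, of 0]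
  by (simp add: Ppt_def prod_eq_iff fst_sum snd_sum)

lemma sum_cos_angle_diff:
  assumes "1 < n"
  shows "(\<Sum>i<n. cos (2 * (real i - real j) * pi / real n)) = 0"
proof -
  have "2 * (real i - real j) * pi / real n
        = 2 * real (1::nat) * real i * pi / real n + - (2 * real j * pi / real n)" for i
    by (simp add: diff_divide_distrib algebra_simps)
  then show ?thesis
    by (simp only:) (rule sum_cos_equally_spaced; use assms in simp)
qed

lemma sum_cos_angle_diff_scaleR_Ppt:
  assumes "2 < n"
  shows "(\<Sum>i<n. cos (2 * (real i - real j) * pi / real n) *\<^sub>R Ppt n i) = (real n / 2) *\<^sub>R Ppt n j"
proof -
  define th where "th i = 2 * real i * pi / real n" for i
  have diff: "2 * (real i - real j) * pi / real n = th i - th j" for i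
    by (simp add: th_def diff_divide_distrib algebra_simps)
  have P: "Ppt n i = (cos (th i), sin (th i))" for i
    by (simp add: Ppt_def th_def)
  have double: "2 * th i - th j = 2 * real (2::nat) * real i * pi / real n + - th j" for i
    by (simp add: th_def)
  \<comment> \<open>product-to-sum: the terms at angle 2 th i - th j cancel over a full period because 2 < n\<close>
  have prod: "cos (th i - th j) * cos (th i) = (cos (2 * th i - th j) + cos (th j)) / 2"
             "cos (th i - th j) * sin (th i) = (sin (2 * th i - th j) + sin (th j)) / 2" for i
  proof -
    have "th i - th j - th i = - th j" "th i - th j + th i = 2 * th i - th j"
      by linarith+
    then show "cos (th i - th j) * cos (th i) = (cos (2 * th i - th j) + cos (th j)) / 2"
              "cos (th i - th j) * sin (th i) = (sin (2 * th i - th j) + sin (th j)) / 2"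
      by (simp_all add: cos_times_cos cos_times_sin)
  qed
  have "(\<Sum>i<n. cos (2 * th i - th j)) = 0" "(\<Sum>i<n. sin (2 * th i - th j)) = 0"
    unfolding double by (rule sum_cos_equally_spaced sum_sin_equally_spaced; use assms in simp)+
  then show ?thesis
    unfolding diff P
    by (simp add: prod prod_eq_iff fst_sum snd_sum sum.distrib flip: sum_divide_distrib)
qed

lemma sum_shift_periodic:
  fixes h :: "int \<Rightarrow> 'a::ab_group_add"
  assumes "\<And>k. h (k + int n) = h k"
  shows "(\<Sum>i<n. h (int i - 1)) = (\<Sum>i<n. h (int i))"
proof -
  have "(\<Sum>i<n. h (int i - 1)) + h (int n - 1) = (\<Sum>i<Suc n. h (int i - 1))"
    by simp
  also have "\<dots> = h (-1) + (\<Sum>i<n. h (int i))"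
    by (subst sum.lessThan_Suc_shift) simp
  also have "h (-1) = h (int n - 1)"
    using assms[of "-1"] by simp
  finally show ?thesis
    by (metis add.commute add_right_cancel)
qed

lemma dm_pos:
  assumes "0 < n" "\<And>i. i < n \<Longrightarrow> 0 < d i"
  shows "0 < dm n d k"
proof -
  have "nat (k mod int n) < n"
    using assms(1) by (simp add: nat_less_iff)
  then show ?thesis
    unfolding dm_def using assms(2) by blast
qed

lemma sum_beta:
  assumes "0 < n" "\<And>i. i < n \<Longrightarrow> 0 < d i"
  shows "(\<Sum>i<n. beta n d i) = 1"
proof -
  let ?e = "dm n d"
  define D where "D k = (?e k + ?e (k + 2)) * (?e (k - 1) + ?e (k + 3))" for k
  define h where "h k = ?e k * (?e (k - 1) + ?e (k + 3))" for k
  have "0 < (\<Sum>k<n. D (int k))"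
    using assms by (intro sum_pos) (auto simp: D_def intro!: mult_pos_pos add_pos_pos dm_pos)
  \<comment> \<open>the numerator of beta i differs from D i by h (i - 1) - h i, which telescopes cyclically\<close>
  moreover have "?e (int i - 1) * (?e (int i - 2) + ?e (int i + 2))
        + ?e (int i + 2) * (?e (int i - 1) + ?e (int i + 3))
      = D (int i) + (h (int i - 1) - h (int i))" for i
    by (simp add: D_def h_def algebra_simps)
  moreover have "(\<Sum>i<n. h (int i - 1)) = (\<Sum>i<n. h (int i))"
  proof (rule sum_shift_periodic)
    have "?e (k + int n + c) = ?e (k + c)" for k c
    proof -
      have "k + int n + c = (k + c) + int n"
        by simp
      then show ?thesis
        by (simp only: dm_def mod_add_self2)
    qed
    from this[of _ 0] this[of _ "-1"] this[of _ 3] show "h (k + int n) = h k" for k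
      by (simp add: h_def)
  qed
  ultimately show ?thesis
    by (simp add: beta_def sum.distrib sum_subtractf flip: sum_divide_distrib D_def)
qed

lemma Qmat_eq:
  "Qmat n d lam j i = (1 - lam) * beta n d i
     + 2 * lam * alpha n d j * (1 + 2 * cos (2 * (real i - real j) * pi / real n))
     + (if i = j then lam - 2 * real n * lam * alpha n d j else 0)"
  by (simp add: Qmat_def algebra_simps)

lemma sum_scaleR_centered:
  fixes x :: "nat \<Rightarrow> 'a::real_vector"
  assumes "(\<Sum>i<n. w i) = 1"
  shows "(\<Sum>i<n. w i *\<^sub>R (x i - c)) = (\<Sum>i<n. w i *\<^sub>R x i) - c"
  using assms by (simp add: scaleR_diff_right sum_subtractf flip: scaleR_sum_left)

lemma sum_row_scaleR_centered:
  fixes x :: "nat \<Rightarrow> 'a::real_vector"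
  assumes "j < n" "(\<Sum>i<n. b i) = 1" "(\<Sum>i<n. g i) = 0" "(\<Sum>i<n. x i) = 0"
    and "(\<Sum>i<n. g i *\<^sub>R x i) = (real n / 2) *\<^sub>R x j"
  defines "c \<equiv> \<Sum>i<n. b i *\<^sub>R x i"
  shows "(\<Sum>i<n. ((1 - lam) * b i + 2 * lam * a * (1 + 2 * g i)
            + (if i = j then lam - 2 * real n * lam * a else 0)) *\<^sub>R (x i - c))
         = lam *\<^sub>R (x j - c)"
proof -
  let ?w = "\<lambda>i. (1 - lam) * b i + 2 * lam * a * (1 + 2 * g i)
            + (if i = j then lam - 2 * real n * lam * a else 0)"
  have "(\<Sum>i<n. ?w i) = (1 - lam) * (\<Sum>i<n. b i) + 2 * lam * a * (real n + 2 * (\<Sum>i<n. g i))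
                          + (lam - 2 * real n * lam * a)"
    using assms(1) by (simp add: sum.distrib flip: sum_distrib_left)
  then have weights: "(\<Sum>i<n. ?w i) = 1"
    using assms(2,3) by (simp add: algebra_simps)
  have "(\<Sum>i<n. ?w i *\<^sub>R x i) = (1 - lam) *\<^sub>R c
          + (2 * lam * a) *\<^sub>R ((\<Sum>i<n. x i) + 2 *\<^sub>R (\<Sum>i<n. g i *\<^sub>R x i))
          + (lam - 2 * real n * lam * a) *\<^sub>R x j"
  proof -
    have "?w i *\<^sub>R x i = (1 - lam) *\<^sub>R (b i *\<^sub>R x i) + (2 * lam * a) *\<^sub>R (x i + 2 *\<^sub>R (g i *\<^sub>R x i))
            + (if i = j then (lam - 2 * real n * lam * a) *\<^sub>R x j else 0)" for i
      by (simp add: algebra_simps)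
    then show ?thesis
      unfolding c_def using assms(1)
      by (simp only: sum.distrib sum.delta finite_lessThan lessThan_iff if_True flip: scaleR_sum_right)
  qed
  also have "\<dots> = (1 - lam) *\<^sub>R c + lam *\<^sub>R x j"
    using assms(4,5) by (simp add: algebra_simps)
  finally show ?thesis
    unfolding sum_scaleR_centered[OF weights] by (simp add: algebra_simps)
qed

theorem lemma3:
  fixes n :: nat and d :: "nat \<Rightarrow> real" and lam :: real
  assumes "n \<ge> 3"
    and "\<And>i. i < n \<Longrightarrow> d i > 0"
    and "1/4 < lam" and "lam < 1"
  shows "\<forall>j<n. (\<Sum>i<n. Qmat n d lam j i *\<^sub>R (Ppt n i - CP n d))
                 = lam *\<^sub>R (Ppt n j - CP n d)"
proof (intro allI impI)
  fix j assume "j < n"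
  have "0 < n" "1 < n" "2 < n"
    using assms(1) by simp_all
  then show "(\<Sum>i<n. Qmat n d lam j i *\<^sub>R (Ppt n i - CP n d)) = lam *\<^sub>R (Ppt n j - CP n d)"
    unfolding Qmat_eq CP_def
    by (intro sum_row_scaleR_centered[where g = "\<lambda>i. cos (2 * (real i - real j) * pi / real n)"]
          \<open>j < n\<close> sum_beta sum_cos_angle_diff sum_Ppt sum_cos_angle_diff_scaleR_Ppt assms(2))
qed

end
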